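(* Let $\sigma$ be a positive finite Borel measure on $\partial\mathbb D$ with Poisson integral $u(z)=\int_{\partial\mathbb D}\frac{1-|z|^2}{|\xi-z|^2}d\sigma(\xi)$, and suppose there is $c>0$ with $\frac{\sigma(I)}{|I|}\ge c\,u(z_I)$ for every arc $I\subset\partial\mathbb D$. Then $\sigma$ is doubling: there is $C>0$ with $\sigma(2I)\le C\sigma(I)$ for every arc $I\subset\partial\mathbb D$.
   Context: $m$ is normalized Lebesgue measure on $\partial\mathbb D$, $|I|=m(I)$; $2I$ is the arc with the same center as $I$ and length $2|I|$ (the whole circle if $2|I|\ge1$); $z_I=(1-|I|)\xi_I$ with $\xi_I$ the center of $I$. *)

theory Defs
  imports "HOL-Analysis.Analysis"
begin

definition circ_m :: "complex measure" where
  "circ_m = distr (density lborel (\<lambda>x. ennreal (indicator {0..2*pi} x / (2*pi)))) borel cis"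

text \<open>Closed arc with center cis t and normalized length l (0 < l);
  for l \<ge> 1 it is the whole circle.\<close>
definition circ_arc :: "real \<Rightarrow> real \<Rightarrow> complex set" where
  "circ_arc t l = cis ` {t - pi * min l 1 .. t + pi * min l 1}"

definition poisson_int :: "complex measure \<Rightarrow> complex \<Rightarrow> real" where
  "poisson_int \<sigma> z = (\<integral>\<xi>. (1 - (cmod z)\<^sup>2) / (cmod (\<xi> - z))\<^sup>2 \<partial>\<sigma>)"

end

(*
  Let I be an arc of length |I| = a centred at cis t and z = (1 - a) cis t. Then
  1 - |z|^2 >= a, and every point of 2I lies within (4 pi + 1) a of z, so the Poisson
  kernel at z is at least 1 / ((4 pi + 1)^2 a) on 2I. Integrating gives
  sigma(2I) <= (4 pi + 1)^2 a u(z), and the hypothesis c u(z) <= sigma(I) / a turns this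
  into sigma(2I) <= (4 pi + 1)^2 / c * sigma(I).
*)
theory Submission
  imports Defs
begin

lemma norm_cis_diff_le: "cmod (cis x - cis y) \<le> \<bar>x - y\<bar>"
proof -
  have "(cmod (cis x - cis y))\<^sup>2 = (cos x - cos y)\<^sup>2 + (sin x - sin y)\<^sup>2"
    by (simp add: cmod_def)
  also have "\<dots> = 2 - 2 * cos (x - y)"
    by (simp add: cos_diff power2_eq_square algebra_simps)
  also have "cos (x - y) = cos (2 * ((x - y) / 2))"
    by (simp only: mult_2 field_sum_of_halves)
  also have "\<dots> = 1 - 2 * (sin ((x - y) / 2))\<^sup>2"
    by (rule cos_double_sin)
  finally have "(cmod (cis x - cis y))\<^sup>2 = (2 * sin ((x - y) / 2))\<^sup>2"
    by (simp add: power2_eq_square)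
  then have "cmod (cis x - cis y) = \<bar>2 * sin ((x - y) / 2)\<bar>"
    by (metis norm_ge_zero real_sqrt_abs real_sqrt_unique)
  also have "\<dots> \<le> \<bar>x - y\<bar>"
    using abs_sin_x_le_abs_x[of "(x - y) / 2"] by simp
  finally show ?thesis .
qed

lemma cis_measurable [measurable]: "cis \<in> borel_measurable borel"
  by (intro borel_measurable_continuous_onI continuous_intros)

lemma emeasure_circ_m:
  assumes "A \<in> sets borel"
  shows "emeasure circ_m A = ennreal (1 / (2 * pi)) * emeasure lborel (cis -` A \<inter> {0..2*pi})"
proof -
  have "cis -` A \<in> sets borel"
    using measurable_sets_borel[OF cis_measurable assms] .
  have "emeasure circ_m A
      = emeasure (density lborel (\<lambda>x. ennreal (indicator {0..2*pi} x / (2*pi)))) (cis -` A)"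
    unfolding circ_m_def using assms by (subst emeasure_distr) auto
  also have "\<dots> = (\<integral>\<^sup>+ x. ennreal (1 / (2*pi)) * indicator (cis -` A \<inter> {0..2*pi}) x \<partial>lborel)"
    using \<open>cis -` A \<in> sets borel\<close>
    by (subst emeasure_density) (auto intro!: nn_integral_cong simp: indicator_def)
  also have "\<dots> = ennreal (1 / (2*pi)) * emeasure lborel (cis -` A \<inter> {0..2*pi})"
    using \<open>cis -` A \<in> sets borel\<close> by (subst nn_integral_cmult_indicator) auto
  finally show ?thesis .
qed

lemma measure_circ_m:
  assumes "A \<in> sets borel"
  shows "measure circ_m A = measure lborel (cis -` A \<inter> {0..2*pi}) / (2 * pi)"
proof -
  have "emeasure lborel (cis -` A \<inter> {0..2*pi}) \<le> emeasure lborel {0..2*pi}"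
    by (rule emeasure_mono) auto
  then have "emeasure lborel (cis -` A \<inter> {0..2*pi}) < \<infinity>"
    by (simp add: le_less_trans)
  then show ?thesis
    using assms by (simp add: measure_def emeasure_circ_m enn2real_mult)
qed

lemma measure_circ_m_le_1:
  assumes "A \<in> sets borel"
  shows "measure circ_m A \<le> 1"
proof -
  have "measure lborel (cis -` A \<inter> {0..2*pi}) \<le> measure lborel {0..2*pi}"
    using measurable_sets_borel[OF cis_measurable assms]
    by (intro measure_mono_fmeasurable) (auto simp: fmeasurable_def)
  then show ?thesis
    using assms pi_gt_zero by (simp add: measure_circ_m)
qed

lemma closed_circ_arc: "closed (circ_arc t l)"
  unfolding circ_arc_def
  by (intro compact_imp_closed compact_continuous_image continuous_intros) auto

lemma sets_borel_circ_arc [measurable]: "circ_arc t l \<in> sets borel"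
  using closed_circ_arc by (rule borel_closed)

(* The exact value is l; the bound l / 2 suffices and needs only one subinterval of the preimage. *)
lemma measure_circ_arc_ge:
  assumes "0 < l" "l \<le> 1"
  shows "l / 2 \<le> measure circ_m (circ_arc t l)"
proof -
  define k where "k = \<lfloor>t / (2 * pi)\<rfloor>"
  define t' where "t' = t - 2 * pi * of_int k"
  have "t' = 2 * pi * frac (t / (2 * pi))"
    unfolding t'_def k_def frac_def by (simp add: algebra_simps)
  then have t': "0 \<le> t'" "t' < 2 * pi"
    using frac_lt_1[of "t / (2 * pi)"] by auto
  obtain u where u: "t' - pi * l \<le> u" "u \<le> t'" "0 \<le> u" "u + pi * l \<le> 2 * pi"
  proof (cases "t' + pi * l \<le> 2 * pi")
    case True
    then show ?thesis
      using that[of t'] t' assms by auto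
  next
    case False
    then have "pi * l \<le> t'"
      using assms pi_gt_zero mult_left_le[of l pi] by linarith
    then show ?thesis
      using that[of "t' - pi * l"] t' assms by simp
  qed
  let ?S = "cis -` circ_arc t l \<inter> {0..2*pi}"
  have sub: "{u..u + pi * l} \<subseteq> ?S"
  proof
    fix x assume x: "x \<in> {u..u + pi * l}"
    have "x + 2 * pi * of_int k \<in> {t - pi * min l 1..t + pi * min l 1}"
      using x u assms unfolding t'_def by auto
    moreover have "cis x = cis (x + 2 * pi * of_int k)"
      by (simp flip: cis_mult)
    ultimately show "x \<in> ?S"
      using x u unfolding circ_arc_def by auto
  qed
  have "?S \<in> fmeasurable lborel"
    by (rule fmeasurableI2[of "{0..2*pi}"])
      (use measurable_sets_borel[OF cis_measurable sets_borel_circ_arc] in \<open>auto simp: fmeasurable_def\<close>)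
  then have "measure lborel {u..u + pi * l} \<le> measure lborel ?S"
    by (intro measure_mono_fmeasurable[OF sub]) auto
  then show ?thesis
    using assms pi_gt_zero by (simp add: measure_circ_m field_simps)
qed

definition poisson_kernel :: "complex \<Rightarrow> complex \<Rightarrow> real" where
  "poisson_kernel z \<xi> = (1 - (cmod z)\<^sup>2) / (cmod (\<xi> - z))\<^sup>2"

lemma poisson_int_eq_integral: "poisson_int \<sigma> z = (\<integral>\<xi>. poisson_kernel z \<xi> \<partial>\<sigma>)"
  unfolding poisson_int_def poisson_kernel_def ..

lemma poisson_kernel_nonneg: "cmod z \<le> 1 \<Longrightarrow> 0 \<le> poisson_kernel z \<xi>"
  unfolding poisson_kernel_def by (simp add: power_le_one)

lemma one_minus_norm_le_norm_diff: "cmod \<xi> = 1 \<Longrightarrow> 1 - cmod z \<le> cmod (\<xi> - z)"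
  using norm_triangle_ineq2[of \<xi> z] by simp

lemma poisson_kernel_le:
  assumes "cmod \<xi> = 1" "cmod z < 1"
  shows "poisson_kernel z \<xi> \<le> 1 / (1 - cmod z)\<^sup>2"
proof -
  have "1 - cmod z \<le> cmod (\<xi> - z)"
    using one_minus_norm_le_norm_diff[OF assms(1)] .
  then have "1 / (cmod (\<xi> - z))\<^sup>2 \<le> 1 / (1 - cmod z)\<^sup>2"
    using assms(2) by (intro divide_left_mono power_mono mult_pos_pos) auto
  moreover have "poisson_kernel z \<xi> \<le> 1 / (cmod (\<xi> - z))\<^sup>2"
    unfolding poisson_kernel_def using assms(2) by (intro divide_right_mono) auto
  ultimately show ?thesis
    by linarith
qed

lemma integrable_poisson_kernel:
  assumes "sets \<sigma> = sets borel" "finite_measure \<sigma>" "AE \<xi> in \<sigma>. cmod \<xi> = 1" "cmod z < 1"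
  shows "integrable \<sigma> (poisson_kernel z)"
proof (rule Bochner_Integration.integrable_bound)
  show "integrable \<sigma> (\<lambda>_. 1 / (1 - cmod z)\<^sup>2)"
    using assms(2) by (simp add: finite_measure.integrable_const)
  show "poisson_kernel z \<in> borel_measurable \<sigma>"
    unfolding measurable_cong_sets[OF assms(1) refl] poisson_kernel_def by measurable
  show "AE \<xi> in \<sigma>. norm (poisson_kernel z \<xi>) \<le> norm (1 / (1 - cmod z)\<^sup>2)"
    using assms(3) by eventually_elim
      (use assms(4) poisson_kernel_le poisson_kernel_nonneg[of z] in auto)
qed

lemma measure_le_poisson_int:
  assumes "sets \<sigma> = sets borel" "finite_measure \<sigma>" "AE \<xi> in \<sigma>. cmod \<xi> = 1" "cmod z < 1"
    and "A \<in> sets \<sigma>" "\<forall>\<xi>\<in>A. \<delta> \<le> poisson_kernel z \<xi>"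
  shows "\<delta> * measure \<sigma> A \<le> poisson_int \<sigma> z"
proof -
  interpret finite_measure \<sigma> by (rule assms(2))
  have "\<delta> * measure \<sigma> A = (\<integral>\<xi>. indicator A \<xi> * \<delta> \<partial>\<sigma>)"
    using assms(5) by simp
  also have "\<dots> \<le> (\<integral>\<xi>. poisson_kernel z \<xi> \<partial>\<sigma>)"
  proof (rule integral_mono)
    show "integrable \<sigma> (\<lambda>\<xi>. indicator A \<xi> * \<delta>)"
      using assms(5)
      by (intro integrable_mult_left integrable_real_indicator) (auto simp: less_top[symmetric])
    show "integrable \<sigma> (poisson_kernel z)"
      using integrable_poisson_kernel[OF assms(1-4)] .
    show "indicator A \<xi> * \<delta> \<le> poisson_kernel z \<xi>" for \<xi>
      using assms(4,6) poisson_kernel_nonneg[of z \<xi>] by (cases "\<xi> \<in> A") auto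
  qed
  finally show ?thesis
    by (simp add: poisson_int_eq_integral)
qed

lemma poisson_kernel_ge:
  assumes "0 < a" "a \<le> 1" "0 \<le> M" "\<bar>x - t\<bar> \<le> M * a"
  shows "1 / ((M + 1)\<^sup>2 * a) \<le> poisson_kernel (complex_of_real (1 - a) * cis t) (cis x)"
proof -
  define z where "z = complex_of_real (1 - a) * cis t"
  have norm_z: "cmod z = 1 - a"
    unfolding z_def norm_mult norm_cis norm_of_real using assms(2) by simp
  have "cis t - z = complex_of_real a * cis t"
    by (simp add: z_def algebra_simps)
  then have "cmod (cis t - z) = a"
    using assms(1) by (simp add: norm_mult)
  then have "cmod (cis x - z) \<le> \<bar>x - t\<bar> + a"
    using norm_triangle_ineq[of "cis x - cis t" "cis t - z"] norm_cis_diff_le[of x t] by simp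
  then have upper: "cmod (cis x - z) \<le> (M + 1) * a"
    using assms(4) by (simp add: algebra_simps)
  have lower: "a \<le> cmod (cis x - z)"
    using one_minus_norm_le_norm_diff[of "cis x" z] norm_z by simp
  have "1 / ((M + 1)\<^sup>2 * a) = a / ((M + 1) * a)\<^sup>2"
    using assms(1) by (simp add: power2_eq_square)
  also have "\<dots> \<le> a / (cmod (cis x - z))\<^sup>2"
    using upper lower assms(1) by (intro divide_left_mono power_mono mult_pos_pos) auto
  also have "\<dots> \<le> (1 - (cmod z)\<^sup>2) / (cmod (cis x - z))\<^sup>2"
    using assms(1,2) by (intro divide_right_mono) (simp_all add: norm_z power2_eq_square algebra_simps)
  finally show ?thesis
    by (simp add: poisson_kernel_def z_def)
qed

lemma measure_double_arc_le_poisson_int: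
  assumes "sets \<sigma> = sets borel" "finite_measure \<sigma>" "AE \<xi> in \<sigma>. cmod \<xi> = 1"
    and "0 < l" "l / 2 \<le> a" "a \<le> 1"
  shows "measure \<sigma> (circ_arc t (2 * l))
           \<le> (4 * pi + 1)\<^sup>2 * a * poisson_int \<sigma> (complex_of_real (1 - a) * cis t)"
proof -
  let ?K = "(4 * pi + 1)\<^sup>2"
  have "0 < a"
    using assms(4,5) by simp
  have "0 < ?K"
    using pi_gt_zero by (intro zero_less_power) linarith
  have "\<forall>\<xi>\<in>circ_arc t (2 * l). 1 / (?K * a) \<le> poisson_kernel (complex_of_real (1 - a) * cis t) \<xi>"
  proof
    fix \<xi> assume "\<xi> \<in> circ_arc t (2 * l)"
    then obtain x where x: "\<xi> = cis x" "\<bar>x - t\<bar> \<le> pi * min (2 * l) 1"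
      unfolding circ_arc_def by auto
    have "pi * min (2 * l) 1 \<le> 4 * pi * a"
      using assms(5) pi_gt_zero by (simp add: min_le_iff_disj)
    then have "\<bar>x - t\<bar> \<le> 4 * pi * a"
      using x(2) by linarith
    then show "1 / (?K * a) \<le> poisson_kernel (complex_of_real (1 - a) * cis t) \<xi>"
      using poisson_kernel_ge[OF \<open>0 < a\<close> assms(6), of "4 * pi"] x(1) pi_gt_zero by simp
  qed
  moreover have "cmod (complex_of_real (1 - a) * cis t) < 1"
    unfolding norm_mult norm_cis norm_of_real using \<open>0 < a\<close> assms(6) by simp
  ultimately have "1 / (?K * a) * measure \<sigma> (circ_arc t (2 * l))
      \<le> poisson_int \<sigma> (complex_of_real (1 - a) * cis t)"
    using assms(1-3) by (intro measure_le_poisson_int) auto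
  then show ?thesis
    using \<open>0 < a\<close> \<open>0 < ?K\<close> by (simp add: field_simps)
qed

theorem mainTheorem16:
  fixes \<sigma> :: "complex measure" and c :: real
  assumes "sets \<sigma> = sets borel"
    and "finite_measure \<sigma>"
    and "emeasure \<sigma> (UNIV - sphere 0 1) = 0"
    and "c > 0"
    and "\<forall>t l. 0 < l \<and> l \<le> 1 \<longrightarrow>
           measure \<sigma> (circ_arc t l) / measure circ_m (circ_arc t l)
             \<ge> c * poisson_int \<sigma> (complex_of_real (1 - measure circ_m (circ_arc t l)) * cis t)"
  shows "\<exists>C>0. \<forall>t l. 0 < l \<and> l \<le> 1 \<longrightarrow>
           measure \<sigma> (circ_arc t (2 * l)) \<le> C * measure \<sigma> (circ_arc t l)"
proof -
  define K where "K = (4 * pi + 1)\<^sup>2"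
  have "0 < K"
    unfolding K_def using pi_gt_zero by (intro zero_less_power) linarith
  have on_circle: "AE \<xi> in \<sigma>. cmod \<xi> = 1"
    using assms(1,3) by (intro AE_I'[of "UNIV - sphere 0 1"]) (auto simp: null_sets_def)
  have "measure \<sigma> (circ_arc t (2 * l)) \<le> K / c * measure \<sigma> (circ_arc t l)"
    if "0 < l" "l \<le> 1" for t l
  proof -
    define a where "a = measure circ_m (circ_arc t l)"
    have hyp: "c * poisson_int \<sigma> (complex_of_real (1 - a) * cis t) \<le> measure \<sigma> (circ_arc t l) / a"
      unfolding a_def using assms(5) that by blast
    have "l / 2 \<le> a" "a \<le> 1"
      unfolding a_def using measure_circ_arc_ge measure_circ_m_le_1 that by auto
    then have "measure \<sigma> (circ_arc t (2 * l))
        \<le> K * a * poisson_int \<sigma> (complex_of_real (1 - a) * cis t)"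
      unfolding K_def using measure_double_arc_le_poisson_int assms(1,2) on_circle that by blast
    also have "\<dots> \<le> K * a * (measure \<sigma> (circ_arc t l) / a / c)"
      using hyp assms(4) that \<open>0 < K\<close> \<open>l / 2 \<le> a\<close>
      by (intro mult_left_mono) (auto simp: pos_le_divide_eq mult.commute)
    also have "\<dots> = K / c * measure \<sigma> (circ_arc t l)"
      using \<open>l / 2 \<le> a\<close> that by simp
    finally show ?thesis .
  qed
  then show ?thesis
    using \<open>0 < K\<close> assms(4) by (intro exI[of _ "K / c"]) auto
qed

end
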